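(* $\mathfrak{d}_{\mathrm{game}}^{\mathrm{I}} = \mathfrak{d}_{\mathrm{game}}^{\mathrm{II}} = \mathfrak{d}_{\mathrm{game}^*}^{\mathrm{I}} = \mathfrak{d}$ and $\mathfrak{d}_{\mathrm{game}^*}^{\mathrm{II}} = \mathfrak{c}$.
   Context: For $x,y\in\omega^\omega$, $x\le^* y$ means $x(n)\le y(n)$ for all but finitely many $n$. $\mathfrak{d}$ is the least size of a family $\mathcal{A}\subseteq\omega^\omega$ such that every $x\in\omega^\omega$ satisfies $x\le^* y$ for some $y\in\mathcal{A}$; $\mathfrak{c}=2^{\aleph_0}$. For $\mathcal{A}\subseteq\omega^\omega$, the dominating game with respect to $\mathcal{A}$: at round $k$, Player I plays $n_k\in\omega$ and then Player II plays $i_k\in\{0,1\}$; Player II wins iff $i_k=1$ for all but finitely many $k$ and there is $g\in\mathcal{A}$ with $\{k: i_k=1\}=\{k: n_k<g(k)\}$. The dominating* game with respect to $\mathcal{A}$: at round $k$, Player I plays $n_k\in\omega$ and then Player II plays $m_k\in\omega$; Player II wins iff $\langle m_k:k\in\omega\rangle\in\mathcal{A}$ and $n_k<m_k$ for all but finitely many $k$. $\mathfrak{d}_{\mathrm{game}}^{\mathrm{I}}$ (resp. $\mathfrak{d}_{\mathrm{game}^*}^{\mathrm{I}}$) is the least $|\mathcal{A}|$ such that Player I has no winning strategy in the dominating (resp. dominating* ) game with respect to $\mathcal{A}$; $\mathfrak{d}_{\mathrm{game}}^{\mathrm{II}}$ (resp. $\mathfrak{d}_{\mathrm{game}^*}^{\mathrm{II}}$)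 is the least $|\mathcal{A}|$ such that Player II has a winning strategy in the dominating (resp. dominating* ) game with respect to $\mathcal{A}$. *)

theory Defs
  imports Main
begin

type_synonym baire = "nat \<Rightarrow> nat"

definition le_star :: "baire \<Rightarrow> baire \<Rightarrow> bool" where
  "le_star x y \<longleftrightarrow> finite {n. \<not> x n \<le> y n}"

definition dominating :: "baire set \<Rightarrow> bool" where
  "dominating A \<longleftrightarrow> (\<forall>x. \<exists>y\<in>A. le_star x y)"

text \<open>Dominating game. Plays: n = moves of Player I, i = moves of Player II.\<close>
definition dom_game_II_wins :: "baire set \<Rightarrow> baire \<Rightarrow> (nat \<Rightarrow> bool) \<Rightarrow> bool" where
  "dom_game_II_wins A n i \<longleftrightarrow>
     finite {k. \<not> i k} \<and> (\<exists>g\<in>A. {k. i k} = {k. n k < g k})"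

text \<open>Strategies: Player I sees the previous moves of Player II;
  Player II sees the moves of Player I so far (including the current one).\<close>
definition dom_game_I_has_ws :: "baire set \<Rightarrow> bool" where
  "dom_game_I_has_ws A \<longleftrightarrow> (\<exists>\<sigma> :: bool list \<Rightarrow> nat.
     \<forall>i :: nat \<Rightarrow> bool. \<not> dom_game_II_wins A (\<lambda>k. \<sigma> (map i [0..<k])) i)"

definition dom_game_II_has_ws :: "baire set \<Rightarrow> bool" where
  "dom_game_II_has_ws A \<longleftrightarrow> (\<exists>\<tau> :: nat list \<Rightarrow> bool.
     \<forall>n :: baire. dom_game_II_wins A n (\<lambda>k. \<tau> (map n [0..<Suc k])))"

definition domstar_game_II_wins :: "baire set \<Rightarrow> baire \<Rightarrow> baire \<Rightarrow> bool" where
  "domstar_game_II_wins A n m \<longleftrightarrow> m \<in> A \<and> finite {k. \<not> n k < m k}"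

definition domstar_game_I_has_ws :: "baire set \<Rightarrow> bool" where
  "domstar_game_I_has_ws A \<longleftrightarrow> (\<exists>\<sigma> :: nat list \<Rightarrow> nat.
     \<forall>m :: baire. \<not> domstar_game_II_wins A (\<lambda>k. \<sigma> (map m [0..<k])) m)"

definition domstar_game_II_has_ws :: "baire set \<Rightarrow> bool" where
  "domstar_game_II_has_ws A \<longleftrightarrow> (\<exists>\<tau> :: nat list \<Rightarrow> nat.
     \<forall>n :: baire. domstar_game_II_wins A n (\<lambda>k. \<tau> (map n [0..<Suc k])))"

definition min_witness :: "(baire set \<Rightarrow> bool) \<Rightarrow> baire set \<Rightarrow> bool" where
  "min_witness P A \<longleftrightarrow> P A \<and> (\<forall>B. P B \<longrightarrow> (card_of A, card_of B) \<in> ordLeq)"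

end

theory Submission
  imports Defs "HOL-Library.Countable_Set_Type"
begin

unbundle cardinal_syntax

(* Each of the four game properties forces a family to be dominating: a function x that is not
   dominated can simply be played by Player I.  Conversely, a dominating family D yields families
   of size at most |D| with the game properties.  For the dominating game, shift the members of D
   up by one and overwrite them by constants on initial segments: some member then exceeds a given
   x everywhere, so Player II may always answer 1.  For the dominating* game, let Player II answer
   with g evaluated at the code of the history so far; through the coding, a strategy of Player I
   becomes a single function, and any g dominating it defeats the strategy.
   Finally, a winning strategy \<tau> of Player II in the dominating* game has continuum many plays:
   for X \<subseteq> \<omega>, let Player I play at step k the answer of \<tau> to 0 if k \<in> X, and 0 otherwise.  Then
   X is recovered from the answers of \<tau> together with the finite set of steps where they fail to
   exceed the move of Player I. *)

lemma min_witness_exists: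
  assumes "P B"
  shows "\<exists>A. min_witness P A"
proof -
  obtain A where "P A" and "\<forall>r' \<in> card_of ` Collect P. |A| \<le>o r'"
    using exists_minim_Well_order[of "card_of ` Collect P"] assms card_of_Well_order by blast
  then have "min_witness P A"
    unfolding min_witness_def by blast
  then show ?thesis ..
qed

lemma min_witness_ordIso:
  assumes "min_witness P D" and "min_witness Q A"
    and "\<And>B. Q B \<Longrightarrow> P B"
    and "\<And>B. P B \<Longrightarrow> \<exists>C. Q C \<and> |C| \<le>o |B|"
  shows "|A| =o |D|"
proof -
  obtain C where "Q C" and "|C| \<le>o |D|"
    using assms(1,4) unfolding min_witness_def by blast
  then have "|A| \<le>o |D|"
    using assms(2) ordLeq_transitive unfolding min_witness_def by blast
  moreover have "|D| \<le>o |A|"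
    using assms(1-3) unfolding min_witness_def by blast
  ultimately show ?thesis
    using ordIso_iff_ordLeq by blast
qed

lemma card_of_Times_countable_infinite:
  assumes "infinite A" and "countable B" and "B \<noteq> {}"
  shows "|A \<times> B| =o |A|"
proof -
  have "|B| \<le>o |UNIV :: nat set|"
    using assms(2) countable_card_of_nat by blast
  moreover have "|UNIV :: nat set| \<le>o |A|"
    using assms(1) infinite_iff_card_of_nat by blast
  ultimately have "|B| \<le>o |A|"
    by (rule ordLeq_transitive)
  then show ?thesis
    by (rule card_of_Times_infinite_simps(1)[OF assms(1,3)])
qed

lemma card_of_baire_ordLeq_Pow_nat: "|UNIV :: baire set| \<le>o |UNIV :: nat set set|"
proof (rule card_of_ordLeqI)
  show "inj_on (\<lambda>f. range (\<lambda>k. prod_encode (k, f k))) (UNIV :: baire set)"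
  proof (rule inj_onI)
    fix f g :: baire
    assume graphs: "range (\<lambda>k. prod_encode (k, f k)) = range (\<lambda>k. prod_encode (k, g k))"
    show "f = g"
    proof
      fix k
      have "prod_encode (k, f k) \<in> range (\<lambda>k. prod_encode (k, g k))"
        using graphs by blast
      then show "f k = g k"
        by (auto simp: prod_encode_eq)
    qed
  qed
qed simp

lemma le_star_if_eventually_less: "finite {k. \<not> x k < y k} \<Longrightarrow> le_star x y"
  unfolding le_star_def by (erule finite_subset[rotated]) auto

lemma dominating_UNIV: "dominating UNIV"
  unfolding dominating_def
proof
  fix x :: baire
  have "le_star x x"
    unfolding le_star_def by simp
  then show "\<exists>y\<in>UNIV. le_star x y" by blast
qed

lemma dominating_infinite:
  assumes "dominating D"
  shows "infinite D"
proof
  assume "finite D"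
  obtain g where "g \<in> D" and g: "le_star (\<lambda>k. Suc (\<Sum>h\<in>D. h k)) g"
    using assms unfolding dominating_def by blast
  have "g k \<le> (\<Sum>h\<in>D. h k)" for k
    using \<open>finite D\<close> \<open>g \<in> D\<close> by (intro member_le_sum) auto
  then have "{k. \<not> Suc (\<Sum>h\<in>D. h k) \<le> g k} = UNIV"
    by (auto simp: not_le less_Suc_eq_le)
  then show False
    using g unfolding le_star_def by simp
qed

lemma dom_game_II_wins_le_star:
  assumes "dom_game_II_wins A n i"
  shows "\<exists>g\<in>A. le_star n g"
proof -
  obtain g where "g \<in> A" and "finite {k. \<not> i k}" and "{k. i k} = {k. n k < g k}"
    using assms unfolding dom_game_II_wins_def by blast
  then have "{k. \<not> n k < g k} = {k. \<not> i k}"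
    by (simp add: set_eq_iff)
  with \<open>finite {k. \<not> i k}\<close> have "le_star n g"
    by (simp add: le_star_if_eventually_less)
  with \<open>g \<in> A\<close> show ?thesis by blast
qed

lemma domstar_game_II_wins_le_star: "domstar_game_II_wins A n m \<Longrightarrow> m \<in> A \<and> le_star n m"
  unfolding domstar_game_II_wins_def by (simp add: le_star_if_eventually_less)

lemma dominating_if_not_dom_game_I_has_ws:
  assumes "\<not> dom_game_I_has_ws A"
  shows "dominating A"
  unfolding dominating_def
proof
  fix x
  obtain i where "dom_game_II_wins A x i"
    using assms[unfolded dom_game_I_has_ws_def not_ex not_all not_not, rule_format,
        of "\<lambda>l. x (length l)"]
    by auto
  then show "\<exists>g\<in>A. le_star x g"
    by (rule dom_game_II_wins_le_star)
qed

lemma dominating_if_dom_game_II_has_ws: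
  assumes "dom_game_II_has_ws A"
  shows "dominating A"
  unfolding dominating_def
  using assms dom_game_II_wins_le_star unfolding dom_game_II_has_ws_def by blast

lemma dominating_if_not_domstar_game_I_has_ws:
  assumes "\<not> domstar_game_I_has_ws A"
  shows "dominating A"
  unfolding dominating_def
proof
  fix x
  obtain m where "domstar_game_II_wins A x m"
    using assms[unfolded domstar_game_I_has_ws_def not_ex not_all not_not, rule_format,
        of "\<lambda>l. x (length l)"]
    by auto
  then show "\<exists>g\<in>A. le_star x g"
    using domstar_game_II_wins_le_star by blast
qed

lemma dominating_if_domstar_game_II_has_ws:
  assumes "domstar_game_II_has_ws A"
  shows "dominating A"
  unfolding dominating_def
  using assms domstar_game_II_wins_le_star unfolding domstar_game_II_has_ws_def by blast

lemma dom_game_II_has_ws_if_everywhere_dominating: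
  assumes "\<And>x. \<exists>h\<in>A. \<forall>k. x k < h k"
  shows "dom_game_II_has_ws A"
  unfolding dom_game_II_has_ws_def
proof (intro exI[of _ "\<lambda>_. True"] allI)
  fix n
  obtain h where "h \<in> A" and "\<forall>k. n k < h k"
    using assms by blast
  then show "dom_game_II_wins A n (\<lambda>_. True)"
    unfolding dom_game_II_wins_def by auto
qed

lemma not_dom_game_I_has_ws_if_everywhere_dominating:
  assumes "\<And>x. \<exists>h\<in>A. \<forall>k. x k < h k"
  shows "\<not> dom_game_I_has_ws A"
  unfolding dom_game_I_has_ws_def
proof
  assume "\<exists>\<sigma>. \<forall>i. \<not> dom_game_II_wins A (\<lambda>k. \<sigma> (map i [0..<k])) i"
  then obtain \<sigma> where \<sigma>: "\<forall>i. \<not> dom_game_II_wins A (\<lambda>k. \<sigma> (map i [0..<k])) i"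
    by blast
  obtain h where "h \<in> A" and "\<forall>k. \<sigma> (map (\<lambda>_. True) [0..<k]) < h k"
    using assms[of "\<lambda>k. \<sigma> (map (\<lambda>_. True) [0..<k])"] by blast
  then have "dom_game_II_wins A (\<lambda>k. \<sigma> (map (\<lambda>_. True) [0..<k])) (\<lambda>_. True)"
    unfolding dom_game_II_wins_def by auto
  with \<sigma> show False
    by blast
qed

definition patched_successors :: "baire set \<Rightarrow> baire set" where
  "patched_successors D = (\<lambda>(g, N, c) k. if k < N then c else Suc (g k)) ` (D \<times> UNIV)"

lemma patched_successors_everywhere_dominating:
  assumes "dominating D"
  shows "\<exists>h\<in>patched_successors D. \<forall>k. x k < h k"
proof -
  obtain g where "g \<in> D" and "finite {k. \<not> x k \<le> g k}"
    using assms unfolding dominating_def le_star_def by blast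
  then obtain N where N: "\<And>k. \<not> x k \<le> g k \<Longrightarrow> k < N"
    using finite_nat_bounded by blast
  define c where "c = Suc (\<Sum>j<N. x j)"
  define h where "h = (\<lambda>k. if k < N then c else Suc (g k))"
  have "h \<in> patched_successors D"
    unfolding patched_successors_def h_def using \<open>g \<in> D\<close>
    by (intro image_eqI[of _ _ "(g, N, c)"]) auto
  moreover have "x k < h k" for k
  proof (cases "k < N")
    case True
    then have "x k \<le> (\<Sum>j<N. x j)"
      by (intro member_le_sum) auto
    with True show ?thesis
      unfolding h_def c_def by simp
  next
    case False
    with N show ?thesis
      unfolding h_def by force
  qed
  ultimately show ?thesis
    by blast
qed

lemma card_of_patched_successors:
  assumes "dominating D"
  shows "|patched_successors D| \<le>o |D|"
proof -
  have "|patched_successors D| \<le>o |D \<times> (UNIV :: (nat \<times> nat) set)|"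
    unfolding patched_successors_def by (rule card_of_image)
  moreover have "|D \<times> (UNIV :: (nat \<times> nat) set)| =o |D|"
    using assms dominating_infinite by (intro card_of_Times_countable_infinite) auto
  ultimately show ?thesis
    by (rule ordLeq_ordIso_trans)
qed

fun coded_history :: "baire \<Rightarrow> nat \<Rightarrow> nat list" where
  "coded_history g 0 = []"
| "coded_history g (Suc k) = coded_history g k @ [Suc (g (to_nat (coded_history g k)))]"

definition coded_play :: "baire \<Rightarrow> baire" where
  "coded_play g k = Suc (g (to_nat (coded_history g k)))"

lemma length_coded_history: "length (coded_history g k) = k"
  by (induction k) auto

lemma map_coded_play: "map (coded_play g) [0..<k] = coded_history g k"
  by (induction k) (auto simp: coded_play_def)

lemma not_domstar_game_I_has_ws_coded_plays:
  assumes "dominating D"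
  shows "\<not> domstar_game_I_has_ws (coded_play ` D)"
  unfolding domstar_game_I_has_ws_def
proof
  assume "\<exists>\<sigma>. \<forall>m. \<not> domstar_game_II_wins (coded_play ` D) (\<lambda>k. \<sigma> (map m [0..<k])) m"
  then obtain \<sigma>
    where \<sigma>: "\<forall>m. \<not> domstar_game_II_wins (coded_play ` D) (\<lambda>k. \<sigma> (map m [0..<k])) m"
    by blast
  obtain g where "g \<in> D" and g: "finite {c. \<not> \<sigma> (from_nat c) \<le> g c}"
    using assms[unfolded dominating_def le_star_def, rule_format, of "\<lambda>c. \<sigma> (from_nat c)"]
    by blast
  let ?code = "\<lambda>k. to_nat (coded_history g k)"
  have "inj ?code"
    by (rule injI) (metis length_coded_history to_nat_split)
  then have "finite (?code -` {c. \<not> \<sigma> (from_nat c) \<le> g c})"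
    using g by (rule finite_vimageI[rotated])
  \<comment> \<open>At step k Player I plays \<sigma> \<circ> from_nat at the code of the history.\<close>
  moreover have "{k. \<not> \<sigma> (map (coded_play g) [0..<k]) < coded_play g k}
      \<subseteq> ?code -` {c. \<not> \<sigma> (from_nat c) \<le> g c}"
    by (auto simp: map_coded_play coded_play_def)
  ultimately have
    "domstar_game_II_wins (coded_play ` D) (\<lambda>k. \<sigma> (map (coded_play g) [0..<k])) (coded_play g)"
    unfolding domstar_game_II_wins_def using \<open>g \<in> D\<close> finite_subset by blast
  with \<sigma> show False
    by blast
qed

fun probe_history :: "(nat list \<Rightarrow> nat) \<Rightarrow> nat set \<Rightarrow> nat \<Rightarrow> nat list" where
  "probe_history \<tau> X 0 = []"
| "probe_history \<tau> X (Suc k) =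
     probe_history \<tau> X k @ [if k \<in> X then \<tau> (probe_history \<tau> X k @ [0]) else 0]"

definition probe_play :: "(nat list \<Rightarrow> nat) \<Rightarrow> nat set \<Rightarrow> baire" where
  "probe_play \<tau> X k = (if k \<in> X then \<tau> (probe_history \<tau> X k @ [0]) else 0)"

definition probe_answer :: "(nat list \<Rightarrow> nat) \<Rightarrow> nat set \<Rightarrow> baire" where
  "probe_answer \<tau> X k = \<tau> (probe_history \<tau> X (Suc k))"

definition probe_losses :: "(nat list \<Rightarrow> nat) \<Rightarrow> nat set \<Rightarrow> nat set" where
  "probe_losses \<tau> X = {k \<in> X. \<not> probe_play \<tau> X k < probe_answer \<tau> X k}"

lemma map_probe_play: "map (probe_play \<tau> X) [0..<k] = probe_history \<tau> X k"
  by (induction k) (auto simp: probe_play_def)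

lemma probe_history_cong:
  "\<forall>j<k. j \<in> X \<longleftrightarrow> j \<in> Y \<Longrightarrow> probe_history \<tau> X k = probe_history \<tau> Y k"
  by (induction k) auto

(* If k \<notin> X, Player I plays 0 and gets the answer of \<tau> to 0; if k \<in> X, Player I plays that very
   answer, so \<tau> has to change it unless it loses at step k. *)
lemma mem_iff_probe_answer:
  "k \<in> X \<longleftrightarrow>
    probe_answer \<tau> X k \<noteq> \<tau> (probe_history \<tau> X k @ [0]) \<or> k \<in> probe_losses \<tau> X"
  by (auto simp: probe_answer_def probe_losses_def probe_play_def)

lemma inj_probe_answer_losses: "inj (\<lambda>X. (probe_answer \<tau> X, probe_losses \<tau> X))"
proof (rule injI)
  fix X Y
  assume "(probe_answer \<tau> X, probe_losses \<tau> X) = (probe_answer \<tau> Y, probe_losses \<tau> Y)"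
  then have answer: "probe_answer \<tau> X = probe_answer \<tau> Y"
    and losses: "probe_losses \<tau> X = probe_losses \<tau> Y"
    by simp_all
  have "\<forall>j<k. j \<in> X \<longleftrightarrow> j \<in> Y" for k
  proof (induction k)
    case (Suc k)
    then have "probe_history \<tau> X k = probe_history \<tau> Y k"
      by (rule probe_history_cong)
    then have "k \<in> X \<longleftrightarrow> k \<in> Y"
      using mem_iff_probe_answer[of k X \<tau>] mem_iff_probe_answer[of k Y \<tau>] answer losses by simp
    with Suc show ?case
      using less_Suc_eq by auto
  qed simp
  then show "X = Y"
    by blast
qed

lemma card_of_Pow_nat_ordLeq_if_domstar_game_II_has_ws:
  assumes "domstar_game_II_has_ws A"
  shows "|UNIV :: nat set set| \<le>o |A|"
proof -
  obtain \<tau> where \<tau>: "\<And>n. domstar_game_II_wins A n (\<lambda>k. \<tau> (map n [0..<Suc k]))"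
    using assms unfolding domstar_game_II_has_ws_def by blast
  have "(\<lambda>k. \<tau> (map (probe_play \<tau> X) [0..<Suc k])) = probe_answer \<tau> X" for X
    by (rule ext) (simp only: map_probe_play probe_answer_def)
  then have "domstar_game_II_wins A (probe_play \<tau> X) (probe_answer \<tau> X)" for X
    using \<tau> by metis
  then have "probe_answer \<tau> X \<in> A \<and> finite (probe_losses \<tau> X)" for X
    unfolding domstar_game_II_wins_def probe_losses_def by (auto elim: finite_subset[rotated])
  then have "|UNIV :: nat set set| \<le>o |A \<times> {V :: nat set. finite V}|"
    using inj_probe_answer_losses by (intro card_of_ordLeqI) auto
  moreover have "|A \<times> {V :: nat set. finite V}| =o |A|"
    using assms dominating_if_domstar_game_II_has_ws dominating_infinite countable_Collect_finite
    by (intro card_of_Times_countable_infinite) auto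
  ultimately show ?thesis
    by (rule ordLeq_ordIso_trans)
qed

lemma domstar_game_II_has_ws_UNIV: "domstar_game_II_has_ws UNIV"
  unfolding domstar_game_II_has_ws_def domstar_game_II_wins_def
  by (rule exI[of _ "\<lambda>s. Suc (last s)"]) simp

lemma ex_not_dom_game_I_has_ws_ordLeq:
  assumes "dominating D"
  shows "\<exists>C. \<not> dom_game_I_has_ws C \<and> |C| \<le>o |D|"
  using assms card_of_patched_successors patched_successors_everywhere_dominating
    not_dom_game_I_has_ws_if_everywhere_dominating by blast

lemma ex_dom_game_II_has_ws_ordLeq:
  assumes "dominating D"
  shows "\<exists>C. dom_game_II_has_ws C \<and> |C| \<le>o |D|"
  using assms card_of_patched_successors patched_successors_everywhere_dominating
    dom_game_II_has_ws_if_everywhere_dominating by blast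

lemma ex_not_domstar_game_I_has_ws_ordLeq:
  assumes "dominating D"
  shows "\<exists>C. \<not> domstar_game_I_has_ws C \<and> |C| \<le>o |D|"
  using not_domstar_game_I_has_ws_coded_plays[OF assms] card_of_image by blast

lemma min_witness_domstar_game_II_has_ws_ordIso:
  assumes "min_witness domstar_game_II_has_ws A"
  shows "|A| =o |UNIV :: nat set set|"
proof -
  have "|A| \<le>o |UNIV :: baire set|"
    using assms domstar_game_II_has_ws_UNIV unfolding min_witness_def by blast
  then have "|A| \<le>o |UNIV :: nat set set|"
    using card_of_baire_ordLeq_Pow_nat by (rule ordLeq_transitive)
  moreover have "|UNIV :: nat set set| \<le>o |A|"
    using assms card_of_Pow_nat_ordLeq_if_domstar_game_II_has_ws unfolding min_witness_def by blast
  ultimately show ?thesis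
    using ordIso_iff_ordLeq by blast
qed

theorem mainTheorem4:
  shows "(\<exists>A. min_witness dominating A)
    \<and> (\<exists>A. min_witness (\<lambda>A. \<not> dom_game_I_has_ws A) A)
    \<and> (\<exists>A. min_witness dom_game_II_has_ws A)
    \<and> (\<exists>A. min_witness (\<lambda>A. \<not> domstar_game_I_has_ws A) A)
    \<and> (\<exists>A. min_witness domstar_game_II_has_ws A)
    \<and> (\<forall>D A. min_witness dominating D \<longrightarrow> min_witness (\<lambda>A. \<not> dom_game_I_has_ws A) A
          \<longrightarrow> (card_of A, card_of D) \<in> ordIso)
    \<and> (\<forall>D A. min_witness dominating D \<longrightarrow> min_witness dom_game_II_has_ws A
          \<longrightarrow> (card_of A, card_of D) \<in> ordIso)
    \<and> (\<forall>D A. min_witness dominating D \<longrightarrow> min_witness (\<lambda>A. \<not> domstar_game_I_has_ws A) A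
          \<longrightarrow> (card_of A, card_of D) \<in> ordIso)
    \<and> (\<forall>A. min_witness domstar_game_II_has_ws A
          \<longrightarrow> (card_of A, card_of (UNIV :: nat set set)) \<in> ordIso)"
proof (intro conjI allI impI)
  show "\<exists>A. min_witness dominating A"
    using dominating_UNIV by (rule min_witness_exists)
  show "\<exists>A. min_witness (\<lambda>A. \<not> dom_game_I_has_ws A) A"
    using ex_not_dom_game_I_has_ws_ordLeq[OF dominating_UNIV]
    by (auto intro: min_witness_exists[where P = "\<lambda>A. \<not> dom_game_I_has_ws A"])
  show "\<exists>A. min_witness dom_game_II_has_ws A"
    using ex_dom_game_II_has_ws_ordLeq[OF dominating_UNIV] by (auto intro: min_witness_exists)
  show "\<exists>A. min_witness (\<lambda>A. \<not> domstar_game_I_has_ws A) A"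
    using ex_not_domstar_game_I_has_ws_ordLeq[OF dominating_UNIV]
    by (auto intro: min_witness_exists[where P = "\<lambda>A. \<not> domstar_game_I_has_ws A"])
  show "\<exists>A. min_witness domstar_game_II_has_ws A"
    using domstar_game_II_has_ws_UNIV by (rule min_witness_exists)
  show "|A| =o |D|"
    if "min_witness dominating D" and "min_witness (\<lambda>A. \<not> dom_game_I_has_ws A) A" for D A
    by (rule min_witness_ordIso[OF that
          dominating_if_not_dom_game_I_has_ws ex_not_dom_game_I_has_ws_ordLeq])
  show "|A| =o |D|" if "min_witness dominating D" and "min_witness dom_game_II_has_ws A" for D A
    by (rule min_witness_ordIso[OF that
          dominating_if_dom_game_II_has_ws ex_dom_game_II_has_ws_ordLeq])
  show "|A| =o |D|"
    if "min_witness dominating D" and "min_witness (\<lambda>A. \<not> domstar_game_I_has_ws A) A" for D A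
    by (rule min_witness_ordIso[OF that
          dominating_if_not_domstar_game_I_has_ws ex_not_domstar_game_I_has_ws_ordLeq])
  show "|A| =o |UNIV :: nat set set|" if "min_witness domstar_game_II_has_ws A" for A
    using that by (rule min_witness_domstar_game_II_has_ws_ordIso)
qed

end
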